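(* Let $d\geq 1$ and $m\geq 2$ be integers, and let $M$ be a non-empty finite set of $m$-gons in $\mathbb{R}^d$. Let $\mathcal{H}(M)$ be the hypergraph with vertex set $\mathbb{R}^d$ and edge set $\{X\subseteq \mathbb{R}^d \mid X \text{ is congruent in } \mathbb{R}^d \text{ to some } T\in M\}$. Then there exists a finite set $S$ of $(m+1)$-gons in $\mathbb{R}^d$ such that $\mathcal{H}(M)$ is equivalent to the $(m+1)$-uniform hypergraph $\mathcal{H}(S)$ with vertex set $\mathbb{R}^d$ and edge set $\{Y\subseteq\mathbb{R}^d \mid Y \text{ is congruent in } \mathbb{R}^d \text{ to some element of } S\}$.
   Context: $\mathbb{R}^d$ carries the Euclidean norm; two subsets are congruent if one is the image of the other under an isometry of Euclidean $\mathbb{R}^d$. An $m$-gon is simply an arbitrary subset of $\mathbb{R}^d$ of cardinality exactly $m$ (collinear points allowed). A hypergraph is a pair $(V,E)$ with $V$ non-empty and $E$ a set of subsets of $V$, each of cardinality at least $2$. A proper coloring is a map $\varphi:V\to C$ such that no edge $e\in E$ has $\varphi|_e$ constant; the chromatic number $\chi$ is the least $|C|$ for which a proper coloring exists. Two hypergraphs $\mathcal{H},\mathcal{G}$ on the same vertex set $S$ are equivalent if $\chi(\mathcal{H})=\chi(\mathcal{G})$ and, for every set $C$ with $|C|=\chi(\mathcal{H})=\chi(\mathcal{G})$, a map $\varphi:S\to C$ is a proper coloring of $\mathcal{H}$ if and only if it is a proper coloring of $\mathcal{G}$. *)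

theory Defs
  imports "HOL-Analysis.Analysis"
begin

definition isometry :: "('a::euclidean_space \<Rightarrow> 'a) \<Rightarrow> bool" where
  "isometry f \<longleftrightarrow> bij f \<and> (\<forall>x y. dist (f x) (f y) = dist x y)"

definition congruent :: "'a::euclidean_space set \<Rightarrow> 'a set \<Rightarrow> bool" where
  "congruent X Y \<longleftrightarrow> (\<exists>f. isometry f \<and> f ` X = Y)"

definition is_gon :: "nat \<Rightarrow> 'a set \<Rightarrow> bool" where
  "is_gon m X \<longleftrightarrow> finite X \<and> card X = m"

definition cong_edges :: "'a::euclidean_space set set \<Rightarrow> 'a set set" where
  "cong_edges M = {X. \<exists>T\<in>M. congruent T X}"

definition proper_coloring :: "'a set \<Rightarrow> 'a set set \<Rightarrow> 'c set \<Rightarrow> ('a \<Rightarrow> 'c) \<Rightarrow> bool" where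
  "proper_coloring V E C \<phi> \<longleftrightarrow>
     (\<forall>v\<in>V. \<phi> v \<in> C) \<and> (\<forall>e\<in>E. \<not> (\<exists>c. \<forall>v\<in>e. \<phi> v = c))"

definition colorable :: "'a set \<Rightarrow> 'a set set \<Rightarrow> nat \<Rightarrow> bool" where
  "colorable V E n \<longleftrightarrow> (\<exists>\<phi> :: 'a \<Rightarrow> nat. proper_coloring V E {..<n} \<phi>)"

definition chromatic_number :: "'a set \<Rightarrow> 'a set set \<Rightarrow> nat" where
  "chromatic_number V E = (LEAST n. colorable V E n)"

definition hyp_equivalent :: "'c itself \<Rightarrow> 'a set \<Rightarrow> 'a set set \<Rightarrow> 'a set set \<Rightarrow> bool" where
  "hyp_equivalent _ V E1 E2 \<longleftrightarrow>
     (\<exists>n. colorable V E1 n) \<and> (\<exists>n. colorable V E2 n) \<and>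
     chromatic_number V E1 = chromatic_number V E2 \<and>
     (\<forall>C :: 'c set. finite C \<and> card C = chromatic_number V E1 \<longrightarrow>
        (\<forall>\<phi> :: 'a \<Rightarrow> 'c. proper_coloring V E1 C \<phi> \<longleftrightarrow> proper_coloring V E2 C \<phi>))"

end

theory Submission
  imports Defs
begin

(* Every edge of H(M) is an m-gon with m >= 2, so colouring R^d periodically by the cells of a
   fine grid shows that H(M) has a finite chromatic number k >= 2, and by compactness some finite
   set E0 of edges of H(M) is not (k-1)-colourable. Let F be the vertex set of E0, take k pairwise
   disjoint translates g_i(F) far away from every T in M, and let S consist of the (m+1)-subsets of
   T together with the g_i(F), for T in M, that contain an edge of H(M).

   Every edge of H(S) contains an edge of H(M), so proper colourings of H(M) are proper for H(S).
   Conversely, let a colouring with at most k colours be proper for H(S), and suppose an edge f(T)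
   of H(M) is monochromatic of colour c. If c occurs at some f(g_i(v)), then the image under f of
   T with g_i(v) added is a monochromatic edge of H(S). Otherwise each of the k copies f(g_i(F)) is coloured with the k-1
   remaining colours and so contains a monochromatic edge; two of these edges share their colour,
   and an edge of one copy together with a point of the other gives a monochromatic edge of H(S). *)

section \<open>Colourings of hypergraphs\<close>

definition monochromatic :: "('a \<Rightarrow> 'c) \<Rightarrow> 'a set \<Rightarrow> bool" where
  "monochromatic \<phi> e \<longleftrightarrow> (\<exists>c. \<forall>v\<in>e. \<phi> v = c)"

lemma proper_coloring_iff:
  "proper_coloring V E C \<phi> \<longleftrightarrow> (\<forall>v\<in>V. \<phi> v \<in> C) \<and> (\<forall>e\<in>E. \<not> monochromatic \<phi> e)"
  unfolding proper_coloring_def monochromatic_def ..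

lemma monochromatic_iff: "monochromatic \<phi> e \<longleftrightarrow> (\<forall>v\<in>e. \<forall>w\<in>e. \<phi> v = \<phi> w)"
  unfolding monochromatic_def by (metis equals0I)

lemma monochromatic_image: "monochromatic \<phi> (f ` Y) \<longleftrightarrow> monochromatic (\<phi> \<circ> f) Y"
  unfolding monochromatic_def by simp

lemma proper_coloring_supersets:
  assumes "\<forall>Y\<in>E'. \<exists>X\<in>E. X \<subseteq> Y" and "proper_coloring V E C \<phi>"
  shows "proper_coloring V E' C \<phi>"
  using assms unfolding proper_coloring_def by (meson subsetD)

lemma colorable_if_finite_subsets_colorable:
  fixes E :: "'a set set"
  assumes fin_edges: "\<forall>e\<in>E. finite e"
    and fin_sub: "\<And>E0. E0 \<subseteq> E \<Longrightarrow> finite E0 \<Longrightarrow> colorable UNIV E0 n"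
  shows "colorable UNIV E n"
proof -
  define X where "X = product_topology (\<lambda>_::'a. discrete_topology {..<n}) UNIV"
  have topspace: "topspace X = {\<phi>. \<forall>v. \<phi> v \<in> {..<n}}"
    unfolding X_def by (auto simp: PiE_def extensional_def)
  have "compact_space X"
    unfolding X_def by (simp add: compact_space_product_topology compact_space_discrete_topology)
  define nonmono where "nonmono e = {\<phi>\<in>topspace X. \<not> monochromatic \<phi> e}" for e
  have closed_nonmono: "closedin X (nonmono e)" if "e \<in> E" for e
  proof -
    have "closedin X {\<phi>\<in>topspace X. \<phi> v \<noteq> \<phi> w}" for v w
    proof -
      have "continuous_map X (discrete_topology ({..<n} \<times> {..<n})) (\<lambda>\<phi>. (\<phi> v, \<phi> w))"
        unfolding prod_topology_discrete_topology X_def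
        by (intro continuous_map_pairedI continuous_map_product_projection) simp_all
      from closedin_continuous_map_preimage[OF this, of "{(a, b). a \<noteq> b} \<inter> {..<n} \<times> {..<n}"]
      show ?thesis by (simp add: topspace conj_commute cong: conj_cong)
    qed
    moreover have "nonmono e = (\<Union>(v, w)\<in>e \<times> e. {\<phi>\<in>topspace X. \<phi> v \<noteq> \<phi> w})"
      unfolding nonmono_def monochromatic_iff by blast
    ultimately show ?thesis
      using fin_edges that by (auto intro!: closedin_Union)
  qed
  have "topspace X \<inter> \<Inter> \<F> \<noteq> {}" if "finite \<F>" and "\<F> \<subseteq> nonmono ` E" for \<F>
  proof -
    obtain E0 where E0: "E0 \<subseteq> E" "finite E0" "\<F> = nonmono ` E0"
      using finite_subset_image[OF \<open>finite \<F>\<close> \<open>\<F> \<subseteq> nonmono ` E\<close>] by blast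
    then obtain \<phi> where "proper_coloring UNIV E0 {..<n} \<phi>"
      using fin_sub unfolding colorable_def by blast
    then have "\<phi> \<in> topspace X \<inter> \<Inter> \<F>"
      unfolding E0(3) nonmono_def topspace proper_coloring_iff by blast
    then show ?thesis by blast
  qed
  then have "topspace X \<inter> \<Inter> (nonmono ` E) \<noteq> {}"
    using \<open>compact_space X\<close> closed_nonmono
    unfolding compact_space_def compactin_fip by (simp add: image_subset_iff)
  then obtain \<phi> where "\<phi> \<in> topspace X" "\<forall>e\<in>E. \<phi> \<in> nonmono e"
    by blast
  then have "proper_coloring UNIV E {..<n} \<phi>"
    unfolding proper_coloring_iff nonmono_def topspace by blast
  then show ?thesis
    unfolding colorable_def by blast
qed

lemma finite_subset_not_colorable:
  assumes "\<forall>e\<in>E. finite e" and "\<not> colorable UNIV E n"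
  obtains E0 where "E0 \<subseteq> E" and "finite E0" and "\<not> colorable UNIV E0 n"
  using colorable_if_finite_subsets_colorable assms by blast

lemma monochromatic_comp_inj_on:
  assumes "inj_on g (\<phi> ` e)" and "monochromatic (g \<circ> \<phi>) e"
  shows "monochromatic \<phi> e"
  unfolding monochromatic_iff
proof (intro ballI)
  fix v w assume "v \<in> e" and "w \<in> e"
  with assms(2) have "g (\<phi> v) = g (\<phi> w)"
    unfolding monochromatic_iff comp_def by blast
  then show "\<phi> v = \<phi> w"
    by (rule inj_onD[OF assms(1)]) (use \<open>v \<in> e\<close> \<open>w \<in> e\<close> in auto)
qed

lemma monochromatic_edge_if_not_colorable:
  assumes not_col: "\<not> colorable UNIV E n" and "0 < n"
    and "finite C" and "card C \<le> n" and into_C: "\<forall>v\<in>\<Union>E. \<phi> v \<in> C"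
  shows "\<exists>e\<in>E. monochromatic \<phi> e"
proof (rule ccontr)
  assume no_mono: "\<not> (\<exists>e\<in>E. monochromatic \<phi> e)"
  obtain g where g: "bij_betw g C {0..<card C}"
    using ex_bij_betw_finite_nat[OF \<open>finite C\<close>] by blast
  define \<psi> where "\<psi> v = (if v \<in> \<Union>E then g (\<phi> v) else 0)" for v
  have "proper_coloring UNIV E {..<n} \<psi>"
    unfolding proper_coloring_iff
  proof (intro conjI ballI notI)
    fix v :: 'a
    show "\<psi> v \<in> {..<n}"
    proof (cases "v \<in> \<Union>E")
      case True
      then have "g (\<phi> v) < card C"
        using bij_betw_apply[OF g] into_C by auto
      with True \<open>card C \<le> n\<close> show ?thesis
        unfolding \<psi>_def by simp
    qed (simp add: \<psi>_def \<open>0 < n\<close>)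
  next
    fix e assume "e \<in> E" and "monochromatic \<psi> e"
    moreover have "\<psi> v = (g \<circ> \<phi>) v" if "v \<in> e" for v
      using \<open>e \<in> E\<close> that unfolding \<psi>_def by auto
    ultimately have "monochromatic (g \<circ> \<phi>) e"
      unfolding monochromatic_iff by metis
    moreover have "inj_on g (\<phi> ` e)"
      using bij_betw_imp_inj_on[OF g] by (rule inj_on_subset) (use into_C \<open>e \<in> E\<close> in blast)
    ultimately show False
      using no_mono \<open>e \<in> E\<close> monochromatic_comp_inj_on by blast
  qed
  then show False
    using not_col unfolding colorable_def by blast
qed

lemma pigeonhole_monochromatic_copies:
  fixes \<psi> :: "nat \<Rightarrow> 'a \<Rightarrow> 'c"
  assumes not_col: "\<not> colorable UNIV E n" and "0 < n" and nonempty: "\<forall>e\<in>E. e \<noteq> {}"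
    and "finite C" and "card C \<le> n" and into_C: "\<And>i v. i \<le> n \<Longrightarrow> v \<in> \<Union>E \<Longrightarrow> \<psi> i v \<in> C"
  shows "\<exists>i\<le>n. \<exists>j\<le>n. i \<noteq> j \<and> (\<exists>e\<in>E. \<exists>w\<in>\<Union>E. \<forall>v\<in>e. \<psi> i v = \<psi> j w)"
proof -
  have "\<exists>e\<in>E. \<exists>c\<in>C. \<forall>v\<in>e. \<psi> i v = c" if "i \<le> n" for i
  proof -
    have "\<forall>v\<in>\<Union>E. \<psi> i v \<in> C"
      using into_C that by blast
    then have "\<exists>e\<in>E. monochromatic (\<psi> i) e"
      by (rule monochromatic_edge_if_not_colorable[OF not_col \<open>0 < n\<close> \<open>finite C\<close> \<open>card C \<le> n\<close>])
    then obtain e where "e \<in> E" and "monochromatic (\<psi> i) e"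
      by blast
    moreover obtain v where "v \<in> e"
      using nonempty \<open>e \<in> E\<close> by blast
    ultimately show ?thesis
      using into_C[OF that] unfolding monochromatic_iff by blast
  qed
  then obtain edge colour where copy: "\<And>i. i \<le> n \<Longrightarrow>
      edge i \<in> E \<and> colour i \<in> C \<and> (\<forall>v\<in>edge i. \<psi> i v = colour i)"
    by metis
  have "card (colour ` {..n}) < card {..n}"
  proof -
    have "colour ` {..n} \<subseteq> C"
      using copy by blast
    then have "card (colour ` {..n}) \<le> card C"
      using \<open>finite C\<close> by (rule card_mono[rotated])
    with \<open>card C \<le> n\<close> show ?thesis
      by simp
  qed
  then obtain i j where ij: "i \<le> n" "j \<le> n" "i \<noteq> j" and "colour i = colour j"
    using pigeonhole unfolding inj_on_def by (metis atMost_iff)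
  obtain w where "w \<in> edge j"
    using copy[OF \<open>j \<le> n\<close>] nonempty by blast
  then have "w \<in> \<Union>E" and "\<forall>v\<in>edge i. \<psi> i v = \<psi> j w"
    using copy[OF \<open>i \<le> n\<close>] copy[OF \<open>j \<le> n\<close>] \<open>colour i = colour j\<close> by auto
  with ij copy[OF \<open>i \<le> n\<close>] show ?thesis
    by blast
qed

lemma colorable_chromatic_number:
  "colorable V E n \<Longrightarrow> colorable V E (chromatic_number V E)"
  unfolding chromatic_number_def by (rule LeastI)

lemma chromatic_number_le: "colorable V E n \<Longrightarrow> chromatic_number V E \<le> n"
  unfolding chromatic_number_def by (rule Least_le)

lemma not_colorable_less_chromatic_number:
  "j < chromatic_number V E \<Longrightarrow> \<not> colorable V E j"
  unfolding chromatic_number_def by (rule not_less_Least)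

lemma two_le_chromatic_number:
  assumes "colorable UNIV E n" and "e \<in> E" and "e \<noteq> {}"
  shows "2 \<le> chromatic_number UNIV E"
proof (rule ccontr)
  assume small: "\<not> 2 \<le> chromatic_number UNIV E"
  obtain \<phi> :: "'a \<Rightarrow> nat" where \<phi>: "proper_coloring UNIV E {..<chromatic_number UNIV E} \<phi>"
    using colorable_chromatic_number[OF assms(1)] unfolding colorable_def by blast
  have "\<phi> v = 0" for v
  proof -
    have "\<phi> v < chromatic_number UNIV E"
      using \<phi> unfolding proper_coloring_iff by blast
    with small show ?thesis by linarith
  qed
  then have "monochromatic \<phi> e"
    unfolding monochromatic_def by blast
  with \<phi> \<open>e \<in> E\<close> show False
    unfolding proper_coloring_iff by blast
qed

text \<open>Reflection at type \<open>nat\<close> pins down the chromatic number of \<open>E'\<close>;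
  it cannot be derived from reflection at \<open>'c\<close>, which may have too few elements.\<close>

lemma hyp_equivalentI:
  fixes E E' :: "'a set set"
  assumes "colorable V E n"
    and supersets: "\<forall>Y\<in>E'. \<exists>X\<in>E. X \<subseteq> Y"
    and reflect_nat: "\<And>C \<phi>. finite C \<Longrightarrow> card C \<le> chromatic_number V E \<Longrightarrow>
      proper_coloring V E' C (\<phi> :: 'a \<Rightarrow> nat) \<Longrightarrow> proper_coloring V E C \<phi>"
    and reflect: "\<And>C \<phi>. finite C \<Longrightarrow> card C = chromatic_number V E \<Longrightarrow>
      proper_coloring V E' C (\<phi> :: 'a \<Rightarrow> 'c) \<Longrightarrow> proper_coloring V E C \<phi>"
  shows "hyp_equivalent TYPE('c) V E E'"
proof -
  define k where "k = chromatic_number V E"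
  have "colorable V E k"
    unfolding k_def using \<open>colorable V E n\<close> by (rule colorable_chromatic_number)
  then have col': "colorable V E' k"
    using proper_coloring_supersets[OF supersets] unfolding colorable_def by blast
  have "chromatic_number V E' = k"
  proof (rule antisym)
    show "chromatic_number V E' \<le> k" using col' by (rule chromatic_number_le)
  next
    define j where "j = chromatic_number V E'"
    obtain \<phi> :: "'a \<Rightarrow> nat" where "proper_coloring V E' {..<j} \<phi>"
      using colorable_chromatic_number[OF col'] unfolding colorable_def j_def by blast
    show "k \<le> j"
    proof (rule ccontr)
      assume "\<not> k \<le> j"
      then have "proper_coloring V E {..<j} \<phi>"
        using reflect_nat \<open>proper_coloring V E' {..<j} \<phi>\<close> unfolding k_def by simp
      then show False
        using not_colorable_less_chromatic_number \<open>\<not> k \<le> j\<close> unfolding colorable_def k_def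
        by (metis not_le)
    qed
  qed
  show ?thesis
    unfolding hyp_equivalent_def
  proof (intro conjI allI impI)
    show "\<exists>n. colorable V E n" using assms(1) by blast
    show "\<exists>n. colorable V E' n" using col' by blast
    show "chromatic_number V E = chromatic_number V E'"
      using \<open>chromatic_number V E' = k\<close> k_def by simp
    fix C :: "'c set" and \<phi>
    assume C: "finite C \<and> card C = chromatic_number V E"
    show "proper_coloring V E C \<phi> \<longleftrightarrow> proper_coloring V E' C \<phi>"
    proof
      show "proper_coloring V E C \<phi> \<Longrightarrow> proper_coloring V E' C \<phi>"
        by (rule proper_coloring_supersets[OF supersets])
      show "proper_coloring V E' C \<phi> \<Longrightarrow> proper_coloring V E C \<phi>"
        using C by (intro reflect) auto
    qed
  qed
qed

section \<open>Congruence hypergraphs\<close>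

lemma isometry_id: "isometry id"
  unfolding isometry_def by simp

lemma isometry_comp: "isometry f \<Longrightarrow> isometry g \<Longrightarrow> isometry (f \<circ> g)"
  unfolding isometry_def by (auto intro: bij_comp)

lemma isometry_translation: "isometry (\<lambda>x::'a::euclidean_space. x + v)"
proof -
  have "bij (\<lambda>x::'a. x + v)"
    by (rule bij_betw_byWitness[where f'="\<lambda>x. x - v"]) auto
  then show ?thesis
    unfolding isometry_def by (simp add: dist_norm)
qed

lemma isometry_imp_inj: "isometry f \<Longrightarrow> inj f"
  unfolding isometry_def by (simp add: bij_is_inj)

lemma cong_edges_image:
  assumes "X \<in> cong_edges M" and "isometry f"
  shows "f ` X \<in> cong_edges M"
proof -
  obtain T g where "T \<in> M" "isometry g" "g ` T = X"
    using assms(1) unfolding cong_edges_def congruent_def by blast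
  then have "isometry (f \<circ> g)" and "(f \<circ> g) ` T = f ` X"
    using assms(2) isometry_comp by (auto simp: image_comp)
  with \<open>T \<in> M\<close> show ?thesis
    unfolding cong_edges_def congruent_def by blast
qed

lemma subset_cong_edges: "M \<subseteq> cong_edges M"
  unfolding cong_edges_def congruent_def using isometry_id by force

lemma cong_edges_is_gon:
  assumes "\<forall>T\<in>M. is_gon m T" and "X \<in> cong_edges M"
  shows "is_gon m X"
proof -
  obtain T f where "T \<in> M" "isometry f" "f ` T = X"
    using assms(2) unfolding cong_edges_def congruent_def by blast
  with assms(1) show ?thesis
    unfolding is_gon_def by (metis card_image finite_imageI inj_on_subset subset_UNIV isometry_imp_inj)
qed

section \<open>Finite chromatic number\<close>

lemma dist_less_if_same_cell:
  fixes x y :: "'a::euclidean_space" and s :: real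
  assumes "0 < s" and same: "\<forall>i\<in>Basis. \<lfloor>x \<bullet> i / s\<rfloor> = \<lfloor>y \<bullet> i / s\<rfloor>"
  shows "dist x y < DIM('a) * s"
proof -
  have small: "\<bar>(x - y) \<bullet> i\<bar> < s" if "i \<in> Basis" for i
  proof -
    have "\<bar>x \<bullet> i / s - y \<bullet> i / s\<bar> < 1"
      using same that floor_correct[of "x \<bullet> i / s"] floor_correct[of "y \<bullet> i / s"]
      by (simp add: abs_less_iff) linarith
    also have "x \<bullet> i / s - y \<bullet> i / s = (x - y) \<bullet> i / s"
      by (simp add: inner_diff_left diff_divide_distrib)
    finally show ?thesis
      using \<open>0 < s\<close> by (simp add: abs_divide divide_less_eq_1)
  qed
  have "dist x y \<le> (\<Sum>i\<in>Basis. \<bar>(x - y) \<bullet> i\<bar>)"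
    unfolding dist_norm by (rule norm_le_l1)
  also have "\<dots> < (\<Sum>i\<in>(Basis::'a set). s)"
    by (rule sum_strict_mono) (simp_all add: small)
  also have "\<dots> = DIM('a) * s"
    by simp
  finally show ?thesis .
qed

lemma dist_greater_if_cells_congruent:
  fixes x y :: "'a::euclidean_space" and s :: real and N :: int
  assumes "0 < s" and "i \<in> Basis"
    and differ: "\<lfloor>x \<bullet> i / s\<rfloor> \<noteq> \<lfloor>y \<bullet> i / s\<rfloor>"
    and congruent: "\<lfloor>x \<bullet> i / s\<rfloor> mod N = \<lfloor>y \<bullet> i / s\<rfloor> mod N"
  shows "(N - 1) * s < dist x y"
proof -
  have "N dvd \<lfloor>x \<bullet> i / s\<rfloor> - \<lfloor>y \<bullet> i / s\<rfloor>"
    using congruent by (simp add: mod_eq_dvd_iff)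
  with differ have "\<bar>N\<bar> \<le> \<bar>\<lfloor>x \<bullet> i / s\<rfloor> - \<lfloor>y \<bullet> i / s\<rfloor>\<bar>"
    by (intro dvd_imp_le_int) auto
  then have "N - 1 < \<bar>x \<bullet> i / s - y \<bullet> i / s\<bar>"
    using floor_correct[of "x \<bullet> i / s"] floor_correct[of "y \<bullet> i / s"] by linarith
  also have "x \<bullet> i / s - y \<bullet> i / s = (x - y) \<bullet> i / s"
    by (simp add: inner_diff_left diff_divide_distrib)
  also have "\<bar>(x - y) \<bullet> i / s\<bar> = \<bar>(x - y) \<bullet> i\<bar> / s"
    using \<open>0 < s\<close> by (simp add: abs_divide)
  finally have "(N - 1) * s < \<bar>(x - y) \<bullet> i\<bar>"
    using \<open>0 < s\<close> by (simp add: pos_less_divide_eq)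
  also have "\<dots> \<le> dist x y"
    unfolding dist_norm by (rule Basis_le_norm[OF \<open>i \<in> Basis\<close>])
  finally show ?thesis .
qed

lemma finite_coloring_avoiding_distances:
  fixes a b :: real
  assumes "0 < a"
  shows "\<exists>col :: 'a::euclidean_space \<Rightarrow> 'a \<Rightarrow> int. finite (range col) \<and>
           (\<forall>x y. col x = col y \<longrightarrow> dist x y < a \<or> b < dist x y)"
proof -
  define s where "s = a / DIM('a)"
  define N :: int where "N = \<lceil>\<bar>b\<bar> / s\<rceil> + 2"
  have "0 < s"
    unfolding s_def using \<open>0 < a\<close> by simp
  have "0 \<le> \<bar>b\<bar> / s"
    using \<open>0 < s\<close> by simp
  then have "0 < N"
    unfolding N_def by (simp add: add_nonneg_pos)
  have "b < (N - 1) * s"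
  proof -
    have "\<bar>b\<bar> / s + 1 \<le> N - 1"
      unfolding N_def by linarith
    then have "(\<bar>b\<bar> / s + 1) * s \<le> (N - 1) * s"
      using \<open>0 < s\<close> by (simp add: mult_right_mono)
    then show ?thesis
      using \<open>0 < s\<close> by (simp add: distrib_right)
  qed
  define col where "col x = restrict (\<lambda>i. \<lfloor>x \<bullet> i / s\<rfloor> mod N) Basis" for x :: 'a
  have "range col \<subseteq> (\<Pi>\<^sub>E i\<in>Basis. {0..<N})"
    unfolding col_def using \<open>0 < N\<close> by auto
  then have "finite (range col)"
    by (rule finite_subset) (simp add: finite_PiE)
  moreover have "dist x y < a \<or> b < dist x y" if "col x = col y" for x y
  proof (cases "\<forall>i\<in>Basis. \<lfloor>x \<bullet> i / s\<rfloor> = \<lfloor>y \<bullet> i / s\<rfloor>")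
    case True
    then have "dist x y < DIM('a) * s"
      using \<open>0 < s\<close> by (intro dist_less_if_same_cell)
    then show ?thesis
      unfolding s_def by simp
  next
    case False
    then obtain i where "i \<in> Basis" and "\<lfloor>x \<bullet> i / s\<rfloor> \<noteq> \<lfloor>y \<bullet> i / s\<rfloor>"
      by blast
    moreover have "\<lfloor>x \<bullet> i / s\<rfloor> mod N = \<lfloor>y \<bullet> i / s\<rfloor> mod N"
      using fun_cong[OF \<open>col x = col y\<close>, of i] \<open>i \<in> Basis\<close> unfolding col_def by simp
    ultimately have "(N - 1) * s < dist x y"
      using \<open>0 < s\<close> by (intro dist_greater_if_cells_congruent)
    with \<open>b < (N - 1) * s\<close> show ?thesis
      by simp
  qed
  ultimately show ?thesis
    by blast
qed

lemma colorable_cong_edges: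
  fixes M :: "'a::euclidean_space set set"
  assumes "finite M" and two_points: "\<forall>T\<in>M. \<exists>p\<in>T. \<exists>q\<in>T. p \<noteq> q"
  shows "\<exists>n. colorable UNIV (cong_edges M) n"
proof -
  obtain p q where pq: "\<forall>T\<in>M. p T \<in> T \<and> q T \<in> T \<and> p T \<noteq> q T"
    using two_points by metis
  define D where "D = insert 1 ((\<lambda>T. dist (p T) (q T)) ` M)"
  have "finite D" and "0 < Min D"
    unfolding D_def using \<open>finite M\<close> pq by auto
  have in_D: "Min D \<le> dist (p T) (q T) \<and> dist (p T) (q T) \<le> Max D" if "T \<in> M" for T
    using \<open>finite D\<close> that unfolding D_def by auto
  obtain col :: "'a \<Rightarrow> 'a \<Rightarrow> int" where "finite (range col)"
    and col: "\<forall>x y. col x = col y \<longrightarrow> dist x y < Min D \<or> Max D < dist x y"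
    using finite_coloring_avoiding_distances[OF \<open>0 < Min D\<close>] by blast
  obtain h where h: "bij_betw h (range col) {0..<card (range col)}"
    using ex_bij_betw_finite_nat[OF \<open>finite (range col)\<close>] by blast
  have "proper_coloring UNIV (cong_edges M) {..<card (range col)} (h \<circ> col)"
    unfolding proper_coloring_iff
  proof (intro conjI ballI notI)
    fix v :: 'a
    show "(h \<circ> col) v \<in> {..<card (range col)}"
      using bij_betw_apply[OF h] by auto
  next
    fix X assume "X \<in> cong_edges M" and "monochromatic (h \<circ> col) X"
    then obtain T f where T: "T \<in> M" "isometry f" "f ` T = X"
      unfolding cong_edges_def congruent_def by blast
    with pq \<open>monochromatic (h \<circ> col) X\<close> have "h (col (f (p T))) = h (col (f (q T)))"
      unfolding monochromatic_iff by auto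
    then have "col (f (p T)) = col (f (q T))"
      using bij_betw_imp_inj_on[OF h] by (auto dest: inj_onD)
    moreover have "dist (f (p T)) (f (q T)) = dist (p T) (q T)"
      using T(2) unfolding isometry_def by simp
    ultimately show False
      using col in_D[OF T(1)] by fastforce
  qed
  then show ?thesis
    unfolding colorable_def by blast
qed

lemma two_points_if_is_gon:
  assumes "is_gon m T" and "2 \<le> m"
  shows "\<exists>p\<in>T. \<exists>q\<in>T. p \<noteq> q"
proof -
  have "finite T" and "\<not> card T \<le> Suc 0"
    using assms unfolding is_gon_def by auto
  then show ?thesis
    using card_le_Suc0_iff_eq by blast
qed

lemma chromatic_number_cong_edges:
  fixes M :: "'a::euclidean_space set set"
  assumes "finite M" and "M \<noteq> {}" and gon: "\<forall>T\<in>M. is_gon m T" and "2 \<le> m"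
  obtains n where "colorable UNIV (cong_edges M) (Suc n)"
    and "chromatic_number UNIV (cong_edges M) = Suc n" and "0 < n"
proof -
  have two_points: "\<forall>T\<in>M. \<exists>p\<in>T. \<exists>q\<in>T. p \<noteq> q"
    using gon \<open>2 \<le> m\<close> two_points_if_is_gon by blast
  then obtain n0 where col: "colorable UNIV (cong_edges M) n0"
    using colorable_cong_edges[OF \<open>finite M\<close>] by blast
  obtain T where "T \<in> M" and "T \<noteq> {}"
    using \<open>M \<noteq> {}\<close> two_points by blast
  then have "2 \<le> chromatic_number UNIV (cong_edges M)"
    using two_le_chromatic_number[OF col] subset_cong_edges by blast
  moreover have "colorable UNIV (cong_edges M) (chromatic_number UNIV (cong_edges M))"
    using col by (rule colorable_chromatic_number)
  ultimately show ?thesis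
    using that[of "chromatic_number UNIV (cong_edges M) - 1"] by simp
qed

section \<open>One more point from far-apart copies of an obstruction\<close>

lemma far_apart_translates:
  fixes A F :: "'a::euclidean_space set"
  assumes "bounded A" and "bounded F"
  obtains g :: "nat \<Rightarrow> 'a \<Rightarrow> 'a"
  where "\<And>i. isometry (g i)" and "\<And>i. g i ` F \<inter> A = {}"
    and "\<And>i j. i \<noteq> j \<Longrightarrow> g i ` F \<inter> g j ` F = {}"
proof -
  obtain B where "0 < B" and B: "\<forall>x\<in>A \<union> F. norm x \<le> B"
    using bounded_pos[of "A \<union> F"] assms by auto
  obtain u :: 'a where "norm u = 1"
    using nonempty_Basis norm_Basis by blast
  define t where "t i = (3 * B * real i) *\<^sub>R u" for i
  have same_shift: "i = j" if "norm y \<le> B" "norm z \<le> B" "y + t i = z + t j" for y z i j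
  proof (rule ccontr)
    assume "i \<noteq> j"
    then have "1 \<le> \<bar>real j - real i\<bar>"
      by linarith
    have "y - z = (3 * B * (real j - real i)) *\<^sub>R u"
      using that(3) unfolding t_def by (simp add: algebra_simps)
    then have "norm (y - z) = 3 * B * \<bar>real j - real i\<bar>"
      using \<open>norm u = 1\<close> \<open>0 < B\<close> by (simp add: abs_mult)
    also have "\<dots> \<ge> 3 * B"
      using \<open>1 \<le> \<bar>real j - real i\<bar>\<close> \<open>0 < B\<close> by simp
    finally show False
      using norm_triangle_ineq4[of y z] that(1,2) \<open>0 < B\<close> by linarith
  qed
  \<comment> \<open>\<open>A\<close> sits at the unshifted position \<open>t 0 = 0\<close>, so both disjointness claims
    are instances of \<open>same_shift\<close>.\<close>
  show ?thesis
  proof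
    show "isometry (\<lambda>x. x + t (Suc i))" for i
      by (rule isometry_translation)
    show "(\<lambda>x. x + t (Suc i)) ` F \<inter> A = {}" for i
      using same_shift[of _ _ "Suc i" 0] B by (force simp: t_def)
    show "(\<lambda>x. x + t (Suc i)) ` F \<inter> (\<lambda>x. x + t (Suc j)) ` F = {}" if "i \<noteq> j" for i j
      using same_shift[of _ _ "Suc i" "Suc j"] B that by force
  qed
qed

definition extended_gons :: "'a::euclidean_space set set \<Rightarrow> 'a set \<Rightarrow> 'a set set" where
  "extended_gons M P =
     {Y. \<exists>T\<in>M. Y \<subseteq> T \<union> P \<and> card Y = Suc (card T) \<and> (\<exists>X\<in>cong_edges M. X \<subseteq> Y)}"

lemma finite_extended_gons:
  assumes "finite M" and "\<forall>T\<in>M. finite T" and "finite P"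
  shows "finite (extended_gons M P)"
proof (rule finite_subset)
  show "extended_gons M P \<subseteq> (\<Union>T\<in>M. Pow (T \<union> P))"
    unfolding extended_gons_def by blast
  show "finite (\<Union>T\<in>M. Pow (T \<union> P))"
    using assms by simp
qed

lemma extended_gons_is_gon:
  assumes "\<forall>T\<in>M. is_gon m T" and "Y \<in> extended_gons M P"
  shows "is_gon (Suc m) Y"
  using assms unfolding extended_gons_def is_gon_def by (auto intro: card_ge_0_finite)

lemma cong_edges_extended_gons_contain_edge:
  assumes "Y \<in> cong_edges (extended_gons M P)"
  shows "\<exists>X\<in>cong_edges M. X \<subseteq> Y"
proof -
  obtain Y0 f where "Y0 \<in> extended_gons M P" "isometry f" "f ` Y0 = Y"
    using assms unfolding cong_edges_def congruent_def by blast
  then obtain X where "X \<in> cong_edges M" "X \<subseteq> Y0"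
    unfolding extended_gons_def by blast
  with \<open>isometry f\<close> \<open>f ` Y0 = Y\<close> show ?thesis
    using cong_edges_image by blast
qed

lemma insert_in_extended_gons:
  assumes "T \<in> M" and "Z \<in> cong_edges M" and "finite Z" and "card Z = card T"
    and "Z \<subseteq> T \<union> P" and "x \<in> (T \<union> P) - Z"
  shows "insert x Z \<in> extended_gons M P"
  using assms unfolding extended_gons_def by (intro CollectI bexI[of _ T]) auto

lemma monochromatic_extended_gon_in_copies:
  fixes M :: "'a::euclidean_space set set" and \<phi> :: "'a \<Rightarrow> 'c" and g :: "nat \<Rightarrow> 'a \<Rightarrow> 'a"
  assumes gon: "\<forall>T\<in>M. is_gon m T" and "0 < m" and "T \<in> M"
    and "E0 \<subseteq> cong_edges M" and not_col: "\<not> colorable UNIV E0 n" and "0 < n"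
    and isometry: "\<And>i. isometry (g i)"
    and apart: "\<And>i j. i \<noteq> j \<Longrightarrow> g i ` \<Union>E0 \<inter> g j ` \<Union>E0 = {}"
    and "finite C" and "card C \<le> n" and into_C: "\<And>i v. i \<le> n \<Longrightarrow> v \<in> \<Union>E0 \<Longrightarrow> \<phi> (g i v) \<in> C"
  shows "\<exists>Y\<in>extended_gons M (\<Union>i\<le>n. g i ` \<Union>E0). monochromatic \<phi> Y"
proof -
  have edge_card: "finite e \<and> card e = m" if "e \<in> cong_edges M" for e
    using cong_edges_is_gon[OF gon that] unfolding is_gon_def .
  then have "\<forall>e\<in>E0. e \<noteq> {}"
    using \<open>E0 \<subseteq> cong_edges M\<close> \<open>0 < m\<close> by fastforce
  then obtain i j e w where ij: "i \<le> n" "j \<le> n" "i \<noteq> j" and "e \<in> E0" "w \<in> \<Union>E0"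
    and same: "\<forall>v\<in>e. \<phi> (g i v) = \<phi> (g j w)"
    using pigeonhole_monochromatic_copies[OF not_col \<open>0 < n\<close> _ \<open>finite C\<close> \<open>card C \<le> n\<close>, of "\<lambda>i v. \<phi> (g i v)"]
      into_C by blast
  define Z where "Z = g i ` e"
  have "Z \<in> cong_edges M"
    unfolding Z_def using \<open>e \<in> E0\<close> \<open>E0 \<subseteq> cong_edges M\<close> isometry[of i]
    by (blast intro: cong_edges_image)
  moreover have "g j w \<notin> Z"
    unfolding Z_def using apart[OF ij(3)] \<open>e \<in> E0\<close> \<open>w \<in> \<Union>E0\<close> by blast
  moreover have "Z \<subseteq> (\<Union>i\<le>n. g i ` \<Union>E0)" and "g j w \<in> (\<Union>i\<le>n. g i ` \<Union>E0)"
    unfolding Z_def using ij \<open>e \<in> E0\<close> \<open>w \<in> \<Union>E0\<close> by blast+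
  moreover have "finite Z" and "card Z = card T"
    using edge_card[OF \<open>Z \<in> cong_edges M\<close>] gon \<open>T \<in> M\<close> unfolding is_gon_def by auto
  ultimately have "insert (g j w) Z \<in> extended_gons M (\<Union>i\<le>n. g i ` \<Union>E0)"
    by (intro insert_in_extended_gons[OF \<open>T \<in> M\<close>]) auto
  moreover have "monochromatic \<phi> (insert (g j w) Z)"
    unfolding Z_def monochromatic_def using same by auto
  ultimately show ?thesis
    by blast
qed

lemma proper_coloring_cong_edges_from_extended_gons:
  fixes M :: "'a::euclidean_space set set" and \<phi> :: "'a \<Rightarrow> 'c" and g :: "nat \<Rightarrow> 'a \<Rightarrow> 'a"
  assumes gon: "\<forall>T\<in>M. is_gon m T" and "0 < m"
    and "E0 \<subseteq> cong_edges M" and not_col: "\<not> colorable UNIV E0 n" and "0 < n"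
    and isometry: "\<And>i. isometry (g i)"
    and apart_M: "\<And>i. g i ` \<Union>E0 \<inter> \<Union>M = {}"
    and apart: "\<And>i j. i \<noteq> j \<Longrightarrow> g i ` \<Union>E0 \<inter> g j ` \<Union>E0 = {}"
    and "finite C" and "card C \<le> Suc n"
    and proper: "proper_coloring UNIV (cong_edges (extended_gons M (\<Union>i\<le>n. g i ` \<Union>E0))) C \<phi>"
  shows "proper_coloring UNIV (cong_edges M) C \<phi>"
proof -
  define P where "P = (\<Union>i\<le>n. g i ` \<Union>E0)"
  have into_C: "\<phi> v \<in> C" for v
    using proper unfolding proper_coloring_iff by blast
  show ?thesis
    unfolding proper_coloring_iff
  proof (intro conjI ballI notI)
    show "\<phi> v \<in> C" for v
      by (rule into_C)
  next
    fix X assume "X \<in> cong_edges M" and "monochromatic \<phi> X"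
    then obtain T f where T: "T \<in> M" "isometry f" "f ` T = X"
      unfolding cong_edges_def congruent_def by blast
    have not_mono: "\<not> monochromatic (\<phi> \<circ> f) Y" if "Y \<in> extended_gons M P" for Y
      using proper cong_edges_image[OF subset_cong_edges[THEN subsetD, OF that] T(2)]
      unfolding proper_coloring_iff P_def monochromatic_image[symmetric] by blast
    obtain c where c: "\<forall>v\<in>T. \<phi> (f v) = c"
      using \<open>monochromatic \<phi> X\<close> T(3) unfolding monochromatic_def by auto
    have "finite T" and "card T = m"
      using gon T(1) unfolding is_gon_def by auto
    consider (hit) i v where "i \<le> n" "v \<in> \<Union>E0" "\<phi> (f (g i v)) = c"
      | (avoid) "\<forall>i\<le>n. \<forall>v\<in>\<Union>E0. \<phi> (f (g i v)) \<noteq> c"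
      by blast
    then show False
    proof cases
      case hit
      have "g i v \<in> P - T"
        unfolding P_def using apart_M[of i] T(1) hit by blast
      then have "insert (g i v) T \<in> extended_gons M P"
        using T(1) \<open>finite T\<close> subset_cong_edges by (intro insert_in_extended_gons) auto
      moreover have "monochromatic (\<phi> \<circ> f) (insert (g i v) T)"
        unfolding monochromatic_def using c hit by auto
      ultimately show False
        using not_mono by blast
    next
      case avoid
      obtain x where "x \<in> T"
        using \<open>finite T\<close> \<open>card T = m\<close> \<open>0 < m\<close> by fastforce
      then have "card (C - {c}) \<le> n"
        using c into_C \<open>finite C\<close> \<open>card C \<le> Suc n\<close> by auto
      then have "\<exists>Y\<in>extended_gons M P. monochromatic (\<phi> \<circ> f) Y"
        unfolding P_def using avoid into_C \<open>finite C\<close>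
        by (intro monochromatic_extended_gon_in_copies[OF gon \<open>0 < m\<close> T(1) \<open>E0 \<subseteq> cong_edges M\<close>
              not_col \<open>0 < n\<close> isometry apart, of _ "C - {c}"]) auto
      then show False
        using not_mono by blast
    qed
  qed
qed

theorem theorem3p1:
  fixes M :: "'a::euclidean_space set set" and m :: nat
  assumes "m \<ge> 2"
    and "M \<noteq> {}" and "finite M"
    and "\<forall>T\<in>M. is_gon m T"
  shows "\<exists>S :: 'a set set. finite S \<and> (\<forall>Y\<in>S. is_gon (m + 1) Y) \<and>
           hyp_equivalent TYPE('c) UNIV (cong_edges M) (cong_edges S)"
proof -
  obtain n where col: "colorable UNIV (cong_edges M) (Suc n)"
    and chi: "chromatic_number UNIV (cong_edges M) = Suc n" and "0 < n"
    using chromatic_number_cong_edges[OF assms(3,2,4,1)] .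
  have finite_edges: "\<forall>e\<in>cong_edges M. finite e"
    using cong_edges_is_gon[OF assms(4)] unfolding is_gon_def by blast
  have "\<not> colorable UNIV (cong_edges M) n"
    using chi by (intro not_colorable_less_chromatic_number) simp
  then obtain E0 where E0: "E0 \<subseteq> cong_edges M" "finite E0" and "\<not> colorable UNIV E0 n"
    using finite_subset_not_colorable[OF finite_edges] by blast
  have "finite (\<Union>E0)" and "finite (\<Union>M)"
    using E0 finite_edges \<open>finite M\<close> assms(4) unfolding is_gon_def by auto
  then obtain g :: "nat \<Rightarrow> 'a \<Rightarrow> 'a" where translates: "\<And>i. isometry (g i)"
    "\<And>i. g i ` \<Union>E0 \<inter> \<Union>M = {}" "\<And>i j. i \<noteq> j \<Longrightarrow> g i ` \<Union>E0 \<inter> g j ` \<Union>E0 = {}"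
    using far_apart_translates[OF finite_imp_bounded finite_imp_bounded] by metis
  note reflect = proper_coloring_cong_edges_from_extended_gons[OF assms(4) _ E0(1)
      \<open>\<not> colorable UNIV E0 n\<close> \<open>0 < n\<close> translates]
  define S where "S = extended_gons M (\<Union>i\<le>n. g i ` \<Union>E0)"
  have "hyp_equivalent TYPE('c) UNIV (cong_edges M) (cong_edges S)"
    unfolding S_def using chi \<open>2 \<le> m\<close>
    by (intro hyp_equivalentI[OF col] ballI cong_edges_extended_gons_contain_edge reflect) auto
  moreover have "finite S"
    unfolding S_def using \<open>finite M\<close> assms(4) \<open>finite (\<Union>E0)\<close>
    by (intro finite_extended_gons) (auto simp: is_gon_def)
  moreover have "\<forall>Y\<in>S. is_gon (m + 1) Y"
    unfolding S_def using extended_gons_is_gon[OF assms(4)] by simp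
  ultimately show ?thesis
    by blast
qed

end
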